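(* For every $n\ge1$, the coordinates $(p_j,u_j)$ of the trajectory $T_n$ satisfy $p_0>p_1>\dots>p_{n-1}>p_n=0$ and $0=u_0<u_1<\dots<u_n$.
   Context: $\Phi$ is the partial map of $\mathbb{R}^2$ defined for $p\ne0$ by $\Phi(p,u)=\bigl(p^2(u+1)-1,\ 1/p\bigr)$. For $n\ge1$, the trajectory $T_n$ is the (existing and unique) finite sequence $(p_j,u_j)$, $j=0,\dots,n$, with $(p_j,u_j)=\Phi(p_{j-1},u_{j-1})$ for $1\le j\le n$, $u_0=0$, $p_n=0$, and $p_j>0$ for $0\le j\le n-1$. *)

theory Defs
  imports Complex_Main
begin

text \<open>The partial map Phi, meant to be applied only for p \<noteq> 0.\<close>
definition Phi :: "real \<times> real \<Rightarrow> real \<times> real" where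
  "Phi pu = (let (p, u) = pu in (p^2 * (u + 1) - 1, 1 / p))"

definition is_trajectory :: "nat \<Rightarrow> (nat \<Rightarrow> real) \<Rightarrow> (nat \<Rightarrow> real) \<Rightarrow> bool" where
  "is_trajectory n p u \<longleftrightarrow>
     u 0 = 0 \<and> p n = 0 \<and> (\<forall>j<n. p j > 0) \<and>
     (\<forall>j. 1 \<le> j \<and> j \<le> n \<longrightarrow> (p j, u j) = Phi (p (j - 1), u (j - 1)))"

end

theory Submission
  imports Defs
begin

text \<open>Everything is governed by the quantity \<open>p j * u j\<close>. Since \<open>u (j + 1) = 1 / p j\<close>, the
  inequality \<open>p j * u j < 1\<close> says \<open>u j < u (j + 1)\<close>, and for \<open>j \<ge> 1\<close> it says \<open>p j < p (j - 1)\<close>.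
  If ever \<open>p k > 1\<close> and \<open>p k * u k \<ge> 1\<close>, then \<open>p (k + 1) > p k\<close>, so the same holds at \<open>k + 1\<close>:
  the trajectory escapes and can never reach \<open>p n = 0\<close>. If instead \<open>p j \<le> 1\<close> and
  \<open>p j * u j < 1\<close>, then \<open>p (j + 1) < p j\<close>. Hence \<open>p j * u j < 1\<close> propagates from \<open>u 0 = 0\<close>
  along the whole trajectory.\<close>

lemma Phi_fst_gt:
  fixes b v :: real
  assumes "1 < b" and "1 \<le> b * v"
  shows "b < fst (Phi (b, v))"
proof -
  have "b \<le> b * (b * v)" using assms by simp
  moreover have "1 < b * b" using assms(1) by (metis less_1_mult)
  ultimately show ?thesis by (simp add: Phi_def power2_eq_square algebra_simps)
qed

lemma Phi_fst_lt:
  fixes b v :: real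
  assumes "0 < b" and "b \<le> 1" and "b * v < 1"
  shows "fst (Phi (b, v)) < b"
proof -
  have "b * (b * v) < b" using assms by simp
  moreover have "b * b \<le> 1" using assms(1,2) by (simp add: mult_le_one)
  ultimately show ?thesis by (simp add: Phi_def power2_eq_square algebra_simps)
qed

lemma trajectory_step:
  assumes "is_trajectory n p u" and "j < n"
  shows "(p (Suc j), u (Suc j)) = Phi (p j, u j)"
  using assms unfolding is_trajectory_def by (metis Suc_leI diff_Suc_1 le_add1 plus_1_eq_Suc)

lemma trajectory_u_Suc:
  assumes "is_trajectory n p u" and "j < n"
  shows "u (Suc j) = 1 / p j"
  using trajectory_step[OF assms] by (simp add: Phi_def)

lemma trajectory_pos:
  assumes "is_trajectory n p u" and "j < n"
  shows "0 < p j"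
  using assms unfolding is_trajectory_def by blast

lemma trajectory_no_escape:
  assumes traj: "is_trajectory n p u" and "k \<le> n"
  shows "p k \<le> 1 \<or> p k * u k < 1"
  using assms(2)
proof (induction k rule: inc_induct)
  case base
  show ?case using traj unfolding is_trajectory_def by simp
next
  case (step k)
  show ?case
  proof (rule ccontr)
    assume "\<not> (p k \<le> 1 \<or> p k * u k < 1)"
    then have "1 < p k" and "1 \<le> p k * u k" by auto
    then have "p k < p (Suc k)"
      using Phi_fst_gt trajectory_step[OF traj \<open>k < n\<close>] by (metis fst_conv)
    moreover have "u (Suc k) = 1 / p k" using trajectory_u_Suc[OF traj \<open>k < n\<close>] .
    ultimately have "1 < p (Suc k)" and "1 \<le> p (Suc k) * u (Suc k)"
      using \<open>1 < p k\<close> by auto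
    then show False using step.IH by auto
  qed
qed

lemma trajectory_decreasing_step:
  assumes traj: "is_trajectory n p u" and "j < n" and "p j * u j < 1"
  shows "p (Suc j) < p j"
proof (cases "p j \<le> 1")
  case True
  then show ?thesis
    using Phi_fst_lt trajectory_pos[OF traj \<open>j < n\<close>] assms(3) trajectory_step[OF traj \<open>j < n\<close>]
    by (metis fst_conv)
next
  case False
  have "p (Suc j) \<le> 1 \<or> p (Suc j) * (1 / p j) < 1"
    using trajectory_no_escape[OF traj, of "Suc j"] trajectory_u_Suc[OF traj \<open>j < n\<close>] \<open>j < n\<close>
    by simp
  then show ?thesis using False by auto
qed

lemma trajectory_invariant:
  assumes traj: "is_trajectory n p u" and "j < n"
  shows "p j * u j < 1"
  using assms(2)
proof (induction j)
  case 0
  then show ?case using traj unfolding is_trajectory_def by simp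
next
  case (Suc j)
  then have "p (Suc j) < p j" using trajectory_decreasing_step[OF traj] by simp
  then show ?case
    using trajectory_u_Suc[OF traj] trajectory_pos[OF traj] Suc.prems by simp
qed

theorem lemma4:
  fixes n :: nat and p u :: "nat \<Rightarrow> real"
  assumes "n \<ge> 1" and "is_trajectory n p u"
  shows "(\<forall>j<n. p (Suc j) < p j) \<and> p n = 0 \<and> u 0 = 0 \<and> (\<forall>j<n. u j < u (Suc j))"
proof -
  have "p (Suc j) < p j" if "j < n" for j
    using trajectory_decreasing_step[OF assms(2) that trajectory_invariant[OF assms(2) that]] .
  moreover have "u j < u (Suc j)" if "j < n" for j
    using trajectory_invariant[OF assms(2) that] trajectory_u_Suc[OF assms(2) that]
      trajectory_pos[OF assms(2) that]
    by (simp add: pos_less_divide_eq mult.commute)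
  ultimately show ?thesis using assms(2) unfolding is_trajectory_def by blast
qed

end
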